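(* The $k$-linear category $k[\Delta_{\mathrm{inj}}]$ is free as a left and as a right $u_\Delta(\Omega)$-module, where $u_\Delta(\Omega)$ denotes the image of the $k$-linear functor $u_\Delta\colon\Omega\to k[\Delta_{\mathrm{inj}}]$.
   Context: Let $k$ be a field. For a small category $\mathcal C$, $k[\mathcal C]$ is its $k$-linearization: same objects, $k[\mathcal C](x,y)$ the $k$-vector space with basis $\mathrm{Hom}_{\mathcal C}(x,y)$, composition extended bilinearly. $\Delta_{\mathrm{inj}}$ is the category with objects $[n]=\{0<1<\dots<n\}$, $n\ge 0$, and injective order-preserving maps as morphisms; for $0\le i\le n$, $\delta^i\colon[n-1]\to[n]$ is the injective order-preserving map omitting $i$. $\Omega$ is the $k$-linear category with objects $[n]$, $n\ge0$, generated by arrows $d_n\colon[n-1]\to[n]$ for $n\ge1$ subject only to the relations $d_{n+1}d_n=0$. The $k$-linear functor $u_\Delta\colon\Omega\to k[\Delta_{\mathrm{inj}}]$ is the identity on objects and sends $d_n\mapsto\sum_{i=0}^n(-1)^i\delta^i$. *)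

theory Defs
  imports Main "HOL-Library.Function_Algebras"
begin

text \<open>A morphism [m] -> [n] of Delta_inj is an injective order-preserving map
  {0..m} -> {0..n}, represented canonically as a function nat => nat that is
  strictly monotone on {0..m}, maps {0..m} into {0..n}, and is 0 outside {0..m}.\<close>

definition hom_inj :: "nat \<Rightarrow> nat \<Rightarrow> (nat \<Rightarrow> nat) set" where
  "hom_inj m n = {g. strict_mono_on {0..m} g \<and> g ` {0..m} \<subseteq> {0..n} \<and> (\<forall>i>m. g i = 0)}"

definition cmp :: "nat \<Rightarrow> (nat \<Rightarrow> nat) \<Rightarrow> (nat \<Rightarrow> nat) \<Rightarrow> (nat \<Rightarrow> nat)" where
  "cmp m h g = (\<lambda>i. if i \<le> m then h (g i) else 0)"

text \<open>k[Delta_inj]([m],[n]): k-valued functions supported on hom_inj m n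
  (formal k-linear combinations of morphisms; hom sets are finite).\<close>
definition klin :: "nat \<Rightarrow> nat \<Rightarrow> ((nat \<Rightarrow> nat) \<Rightarrow> 'k::field) set" where
  "klin m n = {v. \<forall>g. g \<notin> hom_inj m n \<longrightarrow> v g = 0}"

definition kcomp :: "nat \<Rightarrow> nat \<Rightarrow> nat \<Rightarrow> ((nat \<Rightarrow> nat) \<Rightarrow> 'k::field)
    \<Rightarrow> ((nat \<Rightarrow> nat) \<Rightarrow> 'k) \<Rightarrow> ((nat \<Rightarrow> nat) \<Rightarrow> 'k)" where
  "kcomp m n p w v = (\<lambda>h. \<Sum>(g', g) \<in> hom_inj n p \<times> hom_inj m n.
       if cmp m g' g = h then w g' * v g else 0)"

definition kid :: "nat \<Rightarrow> ((nat \<Rightarrow> nat) \<Rightarrow> 'k::field)" where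
  "kid m = (\<lambda>h. if h = (\<lambda>i. if i \<le> m then i else 0) then 1 else 0)"

definition coface :: "nat \<Rightarrow> nat \<Rightarrow> (nat \<Rightarrow> nat)" where
  "coface n i = (\<lambda>j. if j \<le> n - 1 then (if j < i then j else Suc j) else 0)"

text \<open>u_Delta(d_n) = sum_{i=0}^n (-1)^i delta^i, an element of k[Delta_inj]([n-1],[n]).\<close>
definition uD :: "nat \<Rightarrow> ((nat \<Rightarrow> nat) \<Rightarrow> 'k::field)" where
  "uD n = (\<lambda>h. \<Sum>i\<in>{0..n}. if h = coface n i then (-1) ^ i else 0)"

text \<open>Image under u_Delta of the unique path d_{m+l} ... d_{m+1} : [m] -> [m+l] in Omega.\<close>
fun upath :: "nat \<Rightarrow> nat \<Rightarrow> ((nat \<Rightarrow> nat) \<Rightarrow> 'k::field)" where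
  "upath m 0 = kid m"
| "upath m (Suc l) = kcomp m (m + l) (m + l + 1) (uD (m + l + 1)) (upath m l)"

text \<open>Since Omega([m],[n]) is spanned by the class of
  the unique path of generators from [m] to [n] (and is 0 if m > n), its image under the
  k-linear functor u_Delta is the k-span of u_Delta of that path.\<close>
definition uimg :: "nat \<Rightarrow> nat \<Rightarrow> ((nat \<Rightarrow> nat) \<Rightarrow> 'k::field) set" where
  "uimg m n = (if m \<le> n then {(\<lambda>h. c * upath m (n - m) h) | c. True} else {\<lambda>h. 0})"

text \<open>M is free as a left A-module (action act x a z alpha b = alpha \<circ> b for
  b in M(x,a), alpha in A(a,z)): for every source x there is a set G x of homogeneous
  generators (a,b), b in M(x,a), such that every f in M(x,z) is uniquely a finite sum
  of alpha_g \<circ> b_g with alpha_g in A(a_g,z).\<close>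
definition free_left ::
  "(nat \<Rightarrow> nat \<Rightarrow> 'v::ab_group_add set) \<Rightarrow> (nat \<Rightarrow> nat \<Rightarrow> 'v set)
     \<Rightarrow> (nat \<Rightarrow> nat \<Rightarrow> nat \<Rightarrow> 'v \<Rightarrow> 'v \<Rightarrow> 'v) \<Rightarrow> bool" where
  "free_left A M act \<longleftrightarrow> (\<exists>G :: nat \<Rightarrow> (nat \<times> 'v) set. \<forall>x.
     (\<forall>(a, b) \<in> G x. b \<in> M x a) \<and>
     (\<forall>z. \<forall>f \<in> M x z. \<exists>!\<alpha>.
        (\<forall>g \<in> G x. \<alpha> g \<in> A (fst g) z) \<and> (\<forall>g. g \<notin> G x \<longrightarrow> \<alpha> g = 0) \<and>
        finite {g \<in> G x. \<alpha> g \<noteq> 0} \<and>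
        f = (\<Sum>g \<in> {g \<in> G x. \<alpha> g \<noteq> 0}. act x (fst g) z (\<alpha> g) (snd g))))"

text \<open>M is free as a right A-module (action b \<circ> alpha for b in M(a,z), alpha in A(x,a)).\<close>
definition free_right ::
  "(nat \<Rightarrow> nat \<Rightarrow> 'v::ab_group_add set) \<Rightarrow> (nat \<Rightarrow> nat \<Rightarrow> 'v set)
     \<Rightarrow> (nat \<Rightarrow> nat \<Rightarrow> nat \<Rightarrow> 'v \<Rightarrow> 'v \<Rightarrow> 'v) \<Rightarrow> bool" where
  "free_right A M act \<longleftrightarrow> (\<exists>G :: nat \<Rightarrow> (nat \<times> 'v) set. \<forall>z.
     (\<forall>(a, b) \<in> G z. b \<in> M a z) \<and>
     (\<forall>x. \<forall>f \<in> M x z. \<exists>!\<alpha>.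
        (\<forall>g \<in> G z. \<alpha> g \<in> A x (fst g)) \<and> (\<forall>g. g \<notin> G z \<longrightarrow> \<alpha> g = 0) \<and>
        finite {g \<in> G z. \<alpha> g \<noteq> 0} \<and>
        f = (\<Sum>g \<in> {g \<in> G z. \<alpha> g \<noteq> 0}. act x (fst g) z (snd g) (\<alpha> g))))"

end

theory Submission
  imports Defs "HOL-Library.Disjoint_Sets"
begin

text \<open>Because \<open>\<partial>\<partial> = 0\<close> for \<open>\<partial> = \<Sum>i. (-1)^i \<delta>\<^sup>i\<close> (a consequence of the simplicial
  identities), \<open>u\<^sub>\<Delta>(\<Omega>)([a],[z])\<close> is spanned by the identity if \<open>a = z\<close>, by \<open>\<partial>\<close> if
  \<open>a + 1 = z\<close>, and is zero otherwise. Freeness therefore amounts to exhibiting, inside each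
  \<open>k[\<Delta>\<^sub>i\<^sub>n\<^sub>j]([x],[z])\<close>, a basis that is unitriangular with respect to the morphisms.

  For the left structure the generators are the morphisms \<open>g\<close> with \<open>g(0)\<close> even. A morphism
  \<open>h\<close> with \<open>h(0)\<close> odd is \<open>\<delta>\<^sup>0 q\<close> for a unique \<open>q\<close> with \<open>q(0)\<close> even, and \<open>\<partial> q\<close> is \<open>\<delta>\<^sup>0 q\<close> plus
  morphisms whose value at \<open>0\<close> is \<open>q(0)\<close>: indeed \<open>\<delta>\<^sup>i q = \<delta>\<^sup>0 q\<close> for \<open>i \<le> q(0)\<close>, and these
  \<open>q(0) + 1\<close> alternating signs add up to \<open>1\<close>. For the right structure the generators are the
  \<open>g\<close> with \<open>g(0) = 0\<close>; a morphism \<open>h\<close> with \<open>h(0) \<noteq> 0\<close> is \<open>q \<delta>\<^sup>0\<close> with \<open>q(0) = 0\<close>, and \<open>q \<partial>\<close> is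
  \<open>q \<delta>\<^sup>0\<close> plus morphisms vanishing at \<open>0\<close>.\<close>

section \<open>Morphisms of \<open>\<Delta>\<^sub>i\<^sub>n\<^sub>j\<close>\<close>

lemma hom_inj_finite: "finite (hom_inj m n)"
proof -
  let ?fun_of = "\<lambda>l i. if i \<le> m then l ! i else 0"
  have "hom_inj m n \<subseteq> ?fun_of ` {l. set l \<subseteq> {0..n} \<and> length l = Suc m}"
  proof
    fix g assume g: "g \<in> hom_inj m n"
    let ?l = "map g [0..<Suc m]"
    have "g = ?fun_of ?l"
      using g unfolding hom_inj_def by (auto simp: fun_eq_iff simp del: upt_Suc)
    moreover have "set ?l \<subseteq> {0..n} \<and> length ?l = Suc m"
      using g unfolding hom_inj_def by (auto simp: image_subset_iff simp del: upt_Suc)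
    ultimately show "g \<in> ?fun_of ` {l. set l \<subseteq> {0..n} \<and> length l = Suc m}"
      by blast
  qed
  moreover have "finite {l. set l \<subseteq> {0..n} \<and> length l = Suc m}"
    using finite_lists_length_eq[of "{0..n}" "Suc m"] by simp
  ultimately show ?thesis
    using finite_subset by blast
qed

lemma hom_injI:
  assumes "\<And>i j. i < j \<Longrightarrow> j \<le> m \<Longrightarrow> g i < g j" and "\<And>i. i \<le> m \<Longrightarrow> g i \<le> n"
    and "\<And>i. m < i \<Longrightarrow> g i = 0"
  shows "g \<in> hom_inj m n"
  using assms unfolding hom_inj_def strict_mono_on_def by auto

lemma hom_inj_less: "g \<in> hom_inj m n \<Longrightarrow> i < j \<Longrightarrow> j \<le> m \<Longrightarrow> g i < g j"
  unfolding hom_inj_def strict_mono_on_def by auto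

lemma hom_inj_le_mono: "g \<in> hom_inj m n \<Longrightarrow> i \<le> j \<Longrightarrow> j \<le> m \<Longrightarrow> g i \<le> g j"
  using hom_inj_less[of g m n i j] by (cases "i = j") auto

lemma hom_inj_le_target: "g \<in> hom_inj m n \<Longrightarrow> i \<le> m \<Longrightarrow> g i \<le> n"
  unfolding hom_inj_def by (auto simp: image_subset_iff)

lemma hom_inj_outside: "g \<in> hom_inj m n \<Longrightarrow> m < i \<Longrightarrow> g i = 0"
  unfolding hom_inj_def by auto

lemma hom_inj_eqI:
  "g \<in> hom_inj m n \<Longrightarrow> g' \<in> hom_inj m n' \<Longrightarrow> (\<And>i. i \<le> m \<Longrightarrow> g i = g' i) \<Longrightarrow> g = g'"
  unfolding hom_inj_def by (auto simp: fun_eq_iff) (metis not_le)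

lemma cmp_hom_inj: "g \<in> hom_inj m n \<Longrightarrow> g' \<in> hom_inj n p \<Longrightarrow> cmp m g' g \<in> hom_inj m p"
  unfolding hom_inj_def cmp_def strict_mono_on_def by (auto simp: subset_iff)

definition id_inj :: "nat \<Rightarrow> nat \<Rightarrow> nat" where
  "id_inj m = (\<lambda>i. if i \<le> m then i else 0)"

lemma id_inj_hom_inj: "id_inj m \<in> hom_inj m m"
  unfolding hom_inj_def id_inj_def strict_mono_on_def by auto

lemma cmp_id_inj_right: "g \<in> hom_inj m n \<Longrightarrow> cmp m g (id_inj m) = g"
  unfolding cmp_def id_inj_def hom_inj_def by (auto simp: fun_eq_iff)

lemma cmp_id_inj_left: "g \<in> hom_inj m n \<Longrightarrow> cmp m (id_inj n) g = g"
  unfolding cmp_def id_inj_def hom_inj_def by (auto simp: fun_eq_iff image_subset_iff)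

lemma coface_hom_inj: "0 < n \<Longrightarrow> coface n i \<in> hom_inj (n - 1) n"
  unfolding coface_def hom_inj_def strict_mono_on_def by auto

lemma cmp_coface_coface:
  assumes "i < j" "j \<le> Suc (Suc m)"
  shows "cmp m (coface (Suc (Suc m)) j) (coface (Suc m) i)
       = cmp m (coface (Suc (Suc m)) i) (coface (Suc m) (j - 1))"
  using assms unfolding cmp_def coface_def by (auto simp: fun_eq_iff)

section \<open>The linearization and the image of \<open>\<Omega>\<close>\<close>

definition kbasis :: "'a \<Rightarrow> 'a \<Rightarrow> 'k::zero_neq_one" where
  "kbasis g = (\<lambda>h. if h = g then 1 else 0)"

lemma kbasis_eq_iff: "kbasis g = (kbasis g' :: 'a \<Rightarrow> 'k::zero_neq_one) \<longleftrightarrow> g = g'"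
  unfolding kbasis_def by (metis zero_neq_one)

lemma sum_mult_kbasis:
  "finite P \<Longrightarrow> (\<Sum>p\<in>P. c p * kbasis p h) = (if h \<in> P then c h else (0::'k::semiring_1))"
  unfolding kbasis_def by (simp add: if_distrib[of "\<lambda>x. _ * x"] sum.delta cong: if_cong)

lemma kbasis_klin: "g \<in> hom_inj m n \<Longrightarrow> kbasis g \<in> klin m n"
  unfolding kbasis_def klin_def by auto

lemma kid_eq_kbasis: "kid m = kbasis (id_inj m)"
  unfolding kid_def kbasis_def id_inj_def by simp

lemma kcomp_apply:
  "kcomp m n p w v h
     = (\<Sum>g'\<in>hom_inj n p. \<Sum>g\<in>hom_inj m n. w g' * v g * kbasis (cmp m g' g) h)"
  unfolding kcomp_def kbasis_def sum.cartesian_product by (auto intro!: sum.cong)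

lemma kcomp_klin: "kcomp m n p w v \<in> klin m p"
  unfolding klin_def kcomp_apply kbasis_def using cmp_hom_inj by (fastforce intro!: sum.neutral)

lemma kcomp_kbasis_right:
  assumes "g \<in> hom_inj m n"
  shows "kcomp m n p w (kbasis g) h = (\<Sum>g'\<in>hom_inj n p. w g' * kbasis (cmp m g' g) h)"
  unfolding kcomp_apply
proof (rule sum.cong[OF refl])
  fix g'
  have "(\<Sum>f\<in>hom_inj m n. w g' * kbasis g f * kbasis (cmp m g' f) h)
      = (\<Sum>f\<in>hom_inj m n. if f = g then w g' * kbasis (cmp m g' g) h else 0)"
    by (rule sum.cong) (auto simp: kbasis_def)
  then show "(\<Sum>f\<in>hom_inj m n. w g' * kbasis g f * kbasis (cmp m g' f) h)
      = w g' * kbasis (cmp m g' g) h"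
    using assms hom_inj_finite by (simp add: sum.delta)
qed

lemma kcomp_kbasis_left:
  assumes "g' \<in> hom_inj n p"
  shows "kcomp m n p (kbasis g') v h = (\<Sum>g\<in>hom_inj m n. v g * kbasis (cmp m g' g) h)"
proof -
  have "kcomp m n p (kbasis g') v h = (\<Sum>f\<in>hom_inj n p.
      if f = g' then (\<Sum>g\<in>hom_inj m n. v g * kbasis (cmp m g' g) h) else 0)"
    unfolding kcomp_apply by (rule sum.cong) (auto simp: kbasis_def)
  then show ?thesis
    using assms hom_inj_finite by (simp add: sum.delta)
qed

lemma kcomp_kid_right:
  assumes "w \<in> klin m p"
  shows "kcomp m m p w (kid m) = w"
proof
  fix h
  have "kcomp m m p w (kid m) h = (\<Sum>g'\<in>hom_inj m p. w g' * kbasis g' h)"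
    unfolding kid_eq_kbasis kcomp_kbasis_right[OF id_inj_hom_inj]
    by (rule sum.cong[OF refl]) (simp add: cmp_id_inj_right)
  also have "\<dots> = w h"
    using assms hom_inj_finite unfolding klin_def by (auto simp: sum_mult_kbasis)
  finally show "kcomp m m p w (kid m) h = w h" .
qed

lemma kcomp_kid_left:
  assumes "v \<in> klin m p"
  shows "kcomp m p p (kid p) v = v"
proof
  fix h
  have "kcomp m p p (kid p) v h = (\<Sum>g\<in>hom_inj m p. v g * kbasis g h)"
    unfolding kid_eq_kbasis kcomp_kbasis_left[OF id_inj_hom_inj]
    by (rule sum.cong[OF refl]) (simp add: cmp_id_inj_left)
  also have "\<dots> = v h"
    using assms hom_inj_finite unfolding klin_def by (auto simp: sum_mult_kbasis)
  finally show "kcomp m p p (kid p) v h = v h" .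
qed

lemma kcomp_scale_left: "kcomp m n p (\<lambda>h. c * w h) v = (\<lambda>h. c * kcomp m n p w v h)"
  unfolding kcomp_def by (auto simp: sum_distrib_left intro!: sum.cong)

lemma kcomp_scale_right: "kcomp m n p w (\<lambda>h. c * v h) = (\<lambda>h. c * kcomp m n p w v h)"
  unfolding kcomp_def by (auto simp: sum_distrib_left intro!: sum.cong)

lemma kcomp_zero_left: "kcomp m n p 0 v = 0"
  unfolding kcomp_def by (auto simp: fun_eq_iff case_prod_beta intro!: sum.neutral)

lemma kcomp_zero_right: "kcomp m n p w 0 = 0"
  unfolding kcomp_def by (auto simp: fun_eq_iff case_prod_beta intro!: sum.neutral)

lemma uD_klin: "0 < n \<Longrightarrow> uD n \<in> klin (n - 1) n"
  unfolding klin_def uD_def using coface_hom_inj by (force intro!: sum.neutral)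

lemma sum_uD_mult:
  assumes "finite H" "\<And>i. i \<le> n \<Longrightarrow> coface n i \<in> H"
  shows "(\<Sum>g\<in>H. uD n g * F g) = (\<Sum>i=0..n. (-1)^i * F (coface n i))"
proof -
  have "(\<Sum>g\<in>H. uD n g * F g) = (\<Sum>i=0..n. \<Sum>g\<in>H. if g = coface n i then (-1)^i * F g else 0)"
    unfolding uD_def sum_distrib_right by (subst sum.swap) (auto intro!: sum.cong)
  also have "\<dots> = (\<Sum>i=0..n. (-1)^i * F (coface n i))"
    using assms by (auto simp: sum.delta intro!: sum.cong)
  finally show ?thesis .
qed

lemma kcomp_uD_uD_apply:
  "kcomp m (Suc m) (Suc (Suc m)) (uD (Suc (Suc m))) (uD (Suc m)) h
    = (\<Sum>(j, i) \<in> {0..Suc (Suc m)} \<times> {0..Suc m}.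
         (-1)^(i + j) * kbasis (cmp m (coface (Suc (Suc m)) j) (coface (Suc m) i)) h)"
proof -
  let ?d1 = "coface (Suc m)" and ?d2 = "coface (Suc (Suc m))"
  have "kcomp m (Suc m) (Suc (Suc m)) (uD (Suc (Suc m))) (uD (Suc m)) h
      = (\<Sum>g'\<in>hom_inj (Suc m) (Suc (Suc m)).
           uD (Suc (Suc m)) g' * (\<Sum>g\<in>hom_inj m (Suc m). uD (Suc m) g * kbasis (cmp m g' g) h))"
    unfolding kcomp_apply by (simp add: sum_distrib_left mult_ac)
  also have "\<dots> = (\<Sum>g'\<in>hom_inj (Suc m) (Suc (Suc m)).
           uD (Suc (Suc m)) g' * (\<Sum>i=0..Suc m. (-1)^i * kbasis (cmp m g' (?d1 i)) h))"
    using coface_hom_inj[of "Suc m"] by (simp add: sum_uD_mult hom_inj_finite)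
  also have "\<dots> = (\<Sum>j=0..Suc (Suc m).
      (-1)^j * (\<Sum>i=0..Suc m. (-1)^i * kbasis (cmp m (?d2 j) (?d1 i)) h))"
    using coface_hom_inj[of "Suc (Suc m)"] by (simp add: sum_uD_mult hom_inj_finite)
  also have "\<dots> = (\<Sum>(j, i) \<in> {0..Suc (Suc m)} \<times> {0..Suc m}.
      (-1)^(i + j) * kbasis (cmp m (?d2 j) (?d1 i)) h)"
    by (subst sum.cartesian_product[symmetric])
      (rule sum.cong[OF refl], simp only: sum_distrib_left power_add mult_ac)
  finally show ?thesis .
qed

lemma kcomp_uD_uD:
  "kcomp m (Suc m) (Suc (Suc m)) (uD (Suc (Suc m))) (uD (Suc m)) = (0 :: _ \<Rightarrow> 'k::field)"
proof
  fix h
  let ?F = "\<lambda>(j, i).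
    (-1)^(i + j) * kbasis (cmp m (coface (Suc (Suc m)) j) (coface (Suc m) i)) h :: 'k"
  let ?\<tau> = "\<lambda>(j, i). if i < j then (i, j - 1) else (Suc i, j)"
  have "(\<Sum>p \<in> {0..Suc (Suc m)} \<times> {0..Suc m}. ?F p) = 0"
  proof (rule sum_involution_eq_0[where h = ?\<tau>])
    fix p assume p: "p \<in> {0..Suc (Suc m)} \<times> {0..Suc m}"
    obtain j i where [simp]: "p = (j, i)" by force
    show "?\<tau> p \<in> {0..Suc (Suc m)} \<times> {0..Suc m}" "?\<tau> (?\<tau> p) = p" "?\<tau> p \<noteq> p"
      using p by auto
    show "?F (?\<tau> p) + ?F p = 0"
    proof (cases "i < j")
      case True
      then obtain j' where [simp]: "j = Suc j'" by (cases j) auto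
      show ?thesis using cmp_coface_coface[of i j m] True p by (simp add: ac_simps)
    next
      case False
      then show ?thesis using cmp_coface_coface[of j "Suc i" m] p by (simp add: ac_simps)
    qed
  qed
  then show "kcomp m (Suc m) (Suc (Suc m)) (uD (Suc (Suc m))) (uD (Suc m)) h = (0 :: _ \<Rightarrow> 'k) h"
    by (simp add: kcomp_uD_uD_apply)
qed

lemma upath_one: "upath m 1 = uD (Suc m)"
  using kcomp_kid_right[OF uD_klin[of "Suc m"]] by simp

lemma upath_eq_0: "2 \<le> l \<Longrightarrow> upath m l = 0"
proof (induction l rule: nat_induct_at_least)
  case base
  have "upath m 2 = kcomp m (Suc m) (Suc (Suc m)) (uD (Suc (Suc m))) (upath m 1)"
    by (simp add: numeral_2_eq_2)
  then show ?case
    by (simp only: upath_one kcomp_uD_uD)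
next
  case (Suc l)
  then show ?case by (simp only: upath.simps kcomp_zero_right)
qed

lemma uimg_self: "uimg z z = {\<lambda>h. c * kid z h | c. True}"
  unfolding uimg_def by simp

lemma uimg_Suc: "uimg y (Suc y) = {\<lambda>h. c * uD (Suc y) h | c. True}"
  unfolding uimg_def by (simp add: upath_one[unfolded One_nat_def] del: upath.simps)

lemma uimg_eq_0:
  assumes "a \<noteq> z" "Suc a \<noteq> z"
  shows "uimg a z = ({0} :: ((nat \<Rightarrow> nat) \<Rightarrow> 'k::field) set)"
proof (cases "a \<le> z")
  case True
  then have "upath a (z - a) h = (0::'k)" for h
    using assms by (simp add: upath_eq_0)
  then show ?thesis
    using True unfolding uimg_def by (auto simp: zero_fun_def)
qed (auto simp: uimg_def zero_fun_def)

section \<open>Freeness from a unitriangular basis\<close>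

lemma sum_fun_apply: "(\<Sum>i\<in>S. F i) x = (\<Sum>i\<in>S. F i x)"
  for F :: "'i \<Rightarrow> 'a \<Rightarrow> 'b::comm_monoid_add"
proof (cases "finite S")
  case True
  then show ?thesis by (induction S rule: finite_induct) auto
qed simp

locale unitriangular_family =
  fixes P :: "'a set" and Q :: "'b set" and B :: "'a set" and sh :: "'b \<Rightarrow> 'a"
    and e :: "'a + 'b \<Rightarrow> 'a \<Rightarrow> 'k::field"
  assumes finite_P: "finite P" and finite_Q: "finite Q" and P_subset: "P \<subseteq> B"
    and e_Inl: "\<And>p. p \<in> P \<Longrightarrow> e (Inl p) = kbasis p"
    and sh_notin: "\<And>q. q \<in> Q \<Longrightarrow> sh q \<notin> P"
    and cover: "\<And>h. h \<in> B \<Longrightarrow> h \<in> P \<or> (\<exists>q\<in>Q. h = sh q)"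
    and e_Inr_sh: "\<And>q q'. q \<in> Q \<Longrightarrow> q' \<in> Q \<Longrightarrow> e (Inr q) (sh q') = (if q = q' then 1 else 0)"
    and e_Inr_outside: "\<And>q h. q \<in> Q \<Longrightarrow> h \<notin> B \<Longrightarrow> e (Inr q) h = 0"
begin

lemma expansion_apply:
  "(\<Sum>i \<in> P <+> Q. c i * e i h)
     = (if h \<in> P then c (Inl h) else 0) + (\<Sum>q\<in>Q. c (Inr q) * e (Inr q) h)"
  using finite_P finite_Q e_Inl by (simp add: sum.Plus sum_mult_kbasis)

lemma expansion_at_sh: "q \<in> Q \<Longrightarrow> (\<Sum>i \<in> P <+> Q. c i * e i (sh q)) = c (Inr q)"
proof -
  assume q: "q \<in> Q"
  have "(\<Sum>q'\<in>Q. c (Inr q') * e (Inr q') (sh q)) = (\<Sum>q'\<in>Q. if q' = q then c (Inr q') else 0)"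
    using e_Inr_sh q by (intro sum.cong) auto
  then show ?thesis
    unfolding expansion_apply using sh_notin q finite_Q by (simp add: sum.delta)
qed

lemma expansion_outside: "h \<notin> B \<Longrightarrow> (\<Sum>i \<in> P <+> Q. c i * e i h) = 0"
  unfolding expansion_apply using P_subset e_Inr_outside by auto

lemma expansion_eq_iff:
  assumes f_outside: "\<And>h. h \<notin> B \<Longrightarrow> f h = 0"
  shows "f = (\<lambda>h. \<Sum>i \<in> P <+> Q. c i * e i h) \<longleftrightarrow>
    (\<forall>q\<in>Q. c (Inr q) = f (sh q)) \<and>
    (\<forall>p\<in>P. c (Inl p) = f p - (\<Sum>q\<in>Q. c (Inr q) * e (Inr q) p))"
    (is "_ \<longleftrightarrow> ?coefficients")
proof
  assume "f = (\<lambda>h. \<Sum>i \<in> P <+> Q. c i * e i h)"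
  then show ?coefficients
    using expansion_at_sh expansion_apply by simp
next
  assume c: ?coefficients
  show "f = (\<lambda>h. \<Sum>i \<in> P <+> Q. c i * e i h)"
  proof
    fix h
    consider "h \<in> P" | q where "q \<in> Q" "h = sh q" | "h \<notin> B"
      using cover by blast
    then show "f h = (\<Sum>i \<in> P <+> Q. c i * e i h)"
    proof cases
      case 1
      then show ?thesis using c expansion_apply by simp
    next
      case 2
      then show ?thesis using c expansion_at_sh by simp
    next
      case 3
      then show ?thesis using expansion_outside f_outside by simp
    qed
  qed
qed

lemma ex1_expansion:
  assumes f_outside: "\<And>h. h \<notin> B \<Longrightarrow> f h = 0"
  shows "\<exists>!c. (\<forall>i. i \<notin> P <+> Q \<longrightarrow> c i = 0) \<and> f = (\<lambda>h. \<Sum>i \<in> P <+> Q. c i * e i h)"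
proof -
  have coefficients_iff: "f = (\<lambda>h. \<Sum>i \<in> P <+> Q. c i * e i h) \<longleftrightarrow>
    (\<forall>q\<in>Q. c (Inr q) = f (sh q)) \<and> (\<forall>p\<in>P. c (Inl p) = f p - (\<Sum>q\<in>Q. c (Inr q) * e (Inr q) p))"
    for c
    by (rule expansion_eq_iff) (rule f_outside)
  let ?c = "\<lambda>i. case i of
      Inl p \<Rightarrow> if p \<in> P then f p - (\<Sum>q\<in>Q. f (sh q) * e (Inr q) p) else 0
    | Inr q \<Rightarrow> if q \<in> Q then f (sh q) else 0"
  show ?thesis
  proof (rule ex1I[of _ ?c])
    have "(\<forall>q\<in>Q. ?c (Inr q) = f (sh q)) \<and>
        (\<forall>p\<in>P. ?c (Inl p) = f p - (\<Sum>q\<in>Q. ?c (Inr q) * e (Inr q) p))"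
      by (auto intro!: sum.cong)
    then have "f = (\<lambda>h. \<Sum>i \<in> P <+> Q. ?c i * e i h)"
      by (rule coefficients_iff[THEN iffD2])
    moreover have "\<forall>i. i \<notin> P <+> Q \<longrightarrow> ?c i = 0"
      by (auto split: sum.split)
    ultimately show "(\<forall>i. i \<notin> P <+> Q \<longrightarrow> ?c i = 0) \<and> f = (\<lambda>h. \<Sum>i \<in> P <+> Q. ?c i * e i h)"
      by blast
  next
    fix c
    assume "(\<forall>i. i \<notin> P <+> Q \<longrightarrow> c i = 0) \<and> f = (\<lambda>h. \<Sum>i \<in> P <+> Q. c i * e i h)"
    then have "\<forall>i. i \<notin> P <+> Q \<longrightarrow> c i = 0" "\<forall>q\<in>Q. c (Inr q) = f (sh q)"
      "\<forall>p\<in>P. c (Inl p) = f p - (\<Sum>q\<in>Q. c (Inr q) * e (Inr q) p)"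
      using coefficients_iff by blast+
    then show "c = ?c"
      by (auto simp: fun_eq_iff split: sum.split intro!: sum.cong)
  qed
qed

end

locale line_coefficient_generators =
  fixes I :: "'i set" and gen :: "'i \<Rightarrow> 'a \<times> ('b \<Rightarrow> 'k::field)" and Gs :: "('a \<times> ('b \<Rightarrow> 'k)) set"
    and A :: "'a \<Rightarrow> ('b \<Rightarrow> 'k) set" and K e :: "'i \<Rightarrow> 'b \<Rightarrow> 'k"
    and act :: "'a \<Rightarrow> ('b \<Rightarrow> 'k) \<Rightarrow> ('b \<Rightarrow> 'k) \<Rightarrow> 'b \<Rightarrow> 'k"
  assumes finite_I: "finite I" and inj_gen: "inj_on gen I" and gen_subset: "gen ` I \<subseteq> Gs"
    and dead: "\<And>g. g \<in> Gs - gen ` I \<Longrightarrow> A (fst g) = {0}"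
    and live: "\<And>i. i \<in> I \<Longrightarrow> A (fst (gen i)) = {\<lambda>h. c * K i h | c. True}"
    and act_live: "\<And>i c. i \<in> I \<Longrightarrow> act (fst (gen i)) (\<lambda>h. c * K i h) (snd (gen i)) = (\<lambda>h. c * e i h)"
    and act_zero: "\<And>a b. act a 0 b = 0"
begin

lemma support_subset: "\<forall>g\<in>Gs. \<alpha> g \<in> A (fst g) \<Longrightarrow> {g\<in>Gs. \<alpha> g \<noteq> 0} \<subseteq> gen ` I"
  using dead by blast

lemma sum_support_eq:
  assumes \<alpha>: "\<forall>g\<in>Gs. \<alpha> g \<in> A (fst g)" and c: "\<And>i. i \<in> I \<Longrightarrow> \<alpha> (gen i) = (\<lambda>h. c i * K i h)"
  shows "(\<Sum>g\<in>{g\<in>Gs. \<alpha> g \<noteq> 0}. act (fst g) (\<alpha> g) (snd g)) = (\<lambda>h. \<Sum>i\<in>I. c i * e i h)"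
proof -
  have "(\<Sum>g\<in>{g\<in>Gs. \<alpha> g \<noteq> 0}. act (fst g) (\<alpha> g) (snd g)) = (\<Sum>g\<in>gen ` I. act (fst g) (\<alpha> g) (snd g))"
    using support_subset[OF \<alpha>] finite_I gen_subset act_zero by (intro sum.mono_neutral_left) auto
  also have "\<dots> = (\<Sum>i\<in>I. (\<lambda>h. c i * e i h))"
    using inj_gen c act_live by (simp add: sum.reindex)
  finally show ?thesis
    by (simp add: fun_eq_iff sum_fun_apply)
qed

lemma ex_line_coefficients:
  assumes "\<forall>g\<in>Gs. \<alpha> g \<in> A (fst g)"
  obtains c where "\<forall>i. i \<notin> I \<longrightarrow> c i = 0" "\<And>i. i \<in> I \<Longrightarrow> \<alpha> (gen i) = (\<lambda>h. c i * K i h)"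
proof
  define c where "c i = (if i \<in> I then SOME c. \<alpha> (gen i) = (\<lambda>h. c * K i h) else 0)" for i
  show "\<forall>i. i \<notin> I \<longrightarrow> c i = 0"
    by (simp add: c_def)
  show "\<alpha> (gen i) = (\<lambda>h. c i * K i h)" if i: "i \<in> I" for i
  proof -
    have "\<exists>c. \<alpha> (gen i) = (\<lambda>h. c * K i h)"
      using assms live[OF i] gen_subset i by blast
    then have "\<alpha> (gen i) = (\<lambda>h. (SOME c. \<alpha> (gen i) = (\<lambda>h. c * K i h)) * K i h)"
      by (rule someI_ex)
    then show ?thesis
      unfolding c_def using i by simp
  qed
qed

lemma coefficients_eqI:
  assumes "\<forall>g\<in>Gs. \<alpha> g \<in> A (fst g)" "\<forall>g. g \<notin> Gs \<longrightarrow> \<alpha> g = 0"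
    and "\<forall>g\<in>Gs. \<beta> g \<in> A (fst g)" "\<forall>g. g \<notin> Gs \<longrightarrow> \<beta> g = 0"
    and "\<And>i. i \<in> I \<Longrightarrow> \<alpha> (gen i) = \<beta> (gen i)"
  shows "\<alpha> = \<beta>"
proof
  fix g
  consider i where "i \<in> I" "g = gen i" | "g \<in> Gs - gen ` I" | "g \<notin> Gs"
    by blast
  then show "\<alpha> g = \<beta> g"
  proof cases
    case (1 i)
    then show ?thesis using assms(5)[of i] by simp
  next
    case 2
    then have "\<alpha> g \<in> {0}" "\<beta> g \<in> {0}"
      using assms(1,3) dead[OF 2] by auto
    then show ?thesis by simp
  next
    case 3
    then show ?thesis using assms(2,4)[rule_format, OF 3] by simp
  qed
qed

lemma ex1_coefficients:
  assumes basis: "\<exists>!c. (\<forall>i. i \<notin> I \<longrightarrow> c i = 0) \<and> f = (\<lambda>h. \<Sum>i\<in>I. c i * e i h)"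
  shows "\<exists>!\<alpha>. (\<forall>g\<in>Gs. \<alpha> g \<in> A (fst g)) \<and> (\<forall>g. g \<notin> Gs \<longrightarrow> \<alpha> g = 0) \<and>
     finite {g\<in>Gs. \<alpha> g \<noteq> 0} \<and> f = (\<Sum>g\<in>{g\<in>Gs. \<alpha> g \<noteq> 0}. act (fst g) (\<alpha> g) (snd g))"
proof -
  obtain c where c: "\<forall>i. i \<notin> I \<longrightarrow> c i = 0" "f = (\<lambda>h. \<Sum>i\<in>I. c i * e i h)"
    using basis by blast
  let ?\<alpha> = "\<lambda>g. if g \<in> gen ` I
    then (\<lambda>h. c (the_inv_into I gen g) * K (the_inv_into I gen g) h) else 0"
  have \<alpha>_gen: "?\<alpha> (gen i) = (\<lambda>h. c i * K i h)" if "i \<in> I" for i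
    using that inj_gen by (simp add: the_inv_into_f_f)
  have \<alpha>_A: "\<forall>g\<in>Gs. ?\<alpha> g \<in> A (fst g)"
    using live dead \<alpha>_gen by auto
  have \<alpha>_outside: "\<forall>g. g \<notin> Gs \<longrightarrow> ?\<alpha> g = 0"
    using gen_subset by auto
  show ?thesis
  proof (rule ex1I[of _ ?\<alpha>], intro conjI)
    show "finite {g\<in>Gs. ?\<alpha> g \<noteq> 0}"
      using finite_subset[OF support_subset[OF \<alpha>_A]] finite_I by blast
    show "f = (\<Sum>g\<in>{g\<in>Gs. ?\<alpha> g \<noteq> 0}. act (fst g) (?\<alpha> g) (snd g))"
      using sum_support_eq[OF \<alpha>_A \<alpha>_gen] c(2) by simp
  next
    fix \<alpha>
    assume \<alpha>: "(\<forall>g\<in>Gs. \<alpha> g \<in> A (fst g)) \<and> (\<forall>g. g \<notin> Gs \<longrightarrow> \<alpha> g = 0) \<and>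
        finite {g\<in>Gs. \<alpha> g \<noteq> 0} \<and> f = (\<Sum>g\<in>{g\<in>Gs. \<alpha> g \<noteq> 0}. act (fst g) (\<alpha> g) (snd g))"
    then have \<alpha>_A': "\<forall>g\<in>Gs. \<alpha> g \<in> A (fst g)"
      by (rule conjunct1)
    from \<alpha> have \<alpha>_outside': "\<forall>g. g \<notin> Gs \<longrightarrow> \<alpha> g = 0"
      by (rule conjunct1[OF conjunct2])
    from \<alpha> have f_sum: "f = (\<Sum>g\<in>{g\<in>Gs. \<alpha> g \<noteq> 0}. act (fst g) (\<alpha> g) (snd g))"
      by (rule conjunct2[OF conjunct2[OF conjunct2]])
    obtain c' where c': "\<forall>i. i \<notin> I \<longrightarrow> c' i = 0" "\<And>i. i \<in> I \<Longrightarrow> \<alpha> (gen i) = (\<lambda>h. c' i * K i h)"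
      using ex_line_coefficients[OF \<alpha>_A'] by blast
    have "f = (\<lambda>h. \<Sum>i\<in>I. c' i * e i h)"
      using f_sum sum_support_eq[OF \<alpha>_A' c'(2)] by simp
    then have "c' = c"
      using basis c c'(1) by blast
    show "\<alpha> = ?\<alpha>"
    proof (rule coefficients_eqI[OF \<alpha>_A' \<alpha>_outside' \<alpha>_A \<alpha>_outside])
      show "\<alpha> (gen i) = ?\<alpha> (gen i)" if "i \<in> I" for i
        using that c'(2) \<alpha>_gen \<open>c' = c\<close> by simp
    qed
  qed (fact \<alpha>_A \<alpha>_outside)+
qed

end

section \<open>The left module structure\<close>

lemma sum_neg_one_power_upto_even:
  assumes "m \<le> n" "even m"
  shows "(\<Sum>i=0..n. if i \<le> m then (-1::'a::ring_1)^i else 0) = 1"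
proof -
  have "(\<Sum>i=0..2*k. (-1::'a)^i) = 1" for k
    by (induction k) (auto simp: numeral_2_eq_2)
  then have "(\<Sum>i=0..m. (-1::'a)^i) = 1"
    using assms(2) by (auto elim!: evenE)
  moreover have "(\<Sum>i=0..n. if i \<le> m then (-1::'a)^i else 0) = (\<Sum>i=0..m. (-1)^i)"
    using assms(1) by (intro sum.mono_neutral_cong_right) auto
  ultimately show ?thesis by simp
qed

definition coface0_comp :: "nat \<Rightarrow> (nat \<Rightarrow> nat) \<Rightarrow> nat \<Rightarrow> nat" where
  "coface0_comp x q = (\<lambda>i. if i \<le> x then Suc (q i) else 0)"

lemma hom_inj_odd_eq_coface0_comp:
  assumes h: "h \<in> hom_inj x z" and odd: "odd (h 0)"
  shows "\<exists>q \<in> hom_inj x (z - 1). 0 < z \<and> even (q 0) \<and> h = coface0_comp x q"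
proof -
  define q where "q = (\<lambda>i. if i \<le> x then h i - 1 else 0)"
  have pos: "0 < h i" if "i \<le> x" for i
    using hom_inj_le_mono[OF h _ that, of 0] odd by (cases "h 0") auto
  have "0 < z"
    using hom_inj_le_target[OF h, of 0] pos[of 0] by simp
  moreover have "q \<in> hom_inj x (z - 1)"
  proof (rule hom_injI)
    show "q i < q j" if "i < j" "j \<le> x" for i j
      using hom_inj_less[OF h that] pos[of i] that unfolding q_def by simp
    show "q i \<le> z - 1" if "i \<le> x" for i
      using hom_inj_le_target[OF h that] that unfolding q_def by simp
  qed (simp add: q_def)
  moreover have "even (q 0)"
    using odd pos[of 0] unfolding q_def by simp
  moreover have "h = coface0_comp x q"
    using pos hom_inj_outside[OF h] unfolding coface0_comp_def q_def by (auto simp: fun_eq_iff)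
  ultimately show ?thesis by blast
qed

lemma coface0_comp_eq_cmp_coface:
  assumes q: "q \<in> hom_inj x y" and q': "q' \<in> hom_inj x y" and "q 0 \<noteq> Suc (q' 0)"
  shows "coface0_comp x q' = cmp x (coface (Suc y) i) q \<longleftrightarrow> i \<le> q 0 \<and> q' = q"
proof -
  have coface_q: "coface (Suc y) i (q k) = (if q k < i then q k else Suc (q k))" if "k \<le> x" for k
    using hom_inj_le_target[OF q that] unfolding coface_def by simp
  have q_ge: "q 0 \<le> q k" if "k \<le> x" for k
    using hom_inj_le_mono[OF q _ that] by simp
  show ?thesis
  proof
    assume eq: "coface0_comp x q' = cmp x (coface (Suc y) i) q"
    have "i \<le> q 0"
      using fun_cong[OF eq, of 0] coface_q[of 0] assms(3)
      unfolding coface0_comp_def cmp_def by (auto split: if_splits)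
    moreover have "q' k = q k" if "k \<le> x" for k
      using fun_cong[OF eq, of k] coface_q[OF that] q_ge[OF that] \<open>i \<le> q 0\<close> that
      unfolding coface0_comp_def cmp_def by simp
    ultimately show "i \<le> q 0 \<and> q' = q"
      using hom_inj_eqI[OF q' q] by blast
  next
    assume "i \<le> q 0 \<and> q' = q"
    then have "coface0_comp x q' k = cmp x (coface (Suc y) i) q k" for k
      using coface_q[of k] q_ge[of k] unfolding coface0_comp_def cmp_def by auto
    then show "coface0_comp x q' = cmp x (coface (Suc y) i) q" ..
  qed
qed

lemma kcomp_uD_kbasis_coface0_comp:
  assumes q: "q \<in> hom_inj x y" and q': "q' \<in> hom_inj x y" and "even (q 0)" "even (q' 0)"
  shows "kcomp x y (Suc y) (uD (Suc y)) (kbasis q) (coface0_comp x q')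
    = (if q = q' then 1 else (0::'k::field))"
proof -
  have "kcomp x y (Suc y) (uD (Suc y)) (kbasis q) (coface0_comp x q')
      = (\<Sum>i=0..Suc y. (-1)^i * kbasis (cmp x (coface (Suc y) i) q) (coface0_comp x q'))"
    unfolding kcomp_kbasis_right[OF q] using coface_hom_inj[of "Suc y"]
    by (simp add: sum_uD_mult hom_inj_finite)
  also have "\<dots> = (\<Sum>i=0..Suc y. if i \<le> q 0 \<and> q = q' then (-1)^i else 0)"
  proof -
    have "q 0 \<noteq> Suc (q' 0)"
      using assms(3,4) by auto
    then show ?thesis
      using coface0_comp_eq_cmp_coface[OF q q'] by (intro sum.cong) (auto simp: kbasis_def)
  qed
  also have "\<dots> = (if q = q' then 1 else 0)"
    using sum_neg_one_power_upto_even[of "q 0" "Suc y"] hom_inj_le_target[OF q, of 0] assms(3)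
    by (cases "q = q'") auto
  finally show ?thesis .
qed

definition left_generators :: "nat \<Rightarrow> (nat \<times> ((nat \<Rightarrow> nat) \<Rightarrow> 'k::field)) set" where
  "left_generators x = {(a, kbasis g) | a g. g \<in> hom_inj x a \<and> even (g 0)}"

(* The guard 0 < z matters: for z = 0 the truncated z - 1 is z itself. *)
lemma unitriangular_family_left:
  "unitriangular_family {p \<in> hom_inj x z. even (p 0)} {q \<in> hom_inj x (z - 1). 0 < z \<and> even (q 0)}
     (hom_inj x z) (coface0_comp x)
     (case_sum kbasis (\<lambda>q. kcomp x (z - 1) z (uD z) (kbasis q)) :: _ \<Rightarrow> _ \<Rightarrow> 'k::field)"
  (is "unitriangular_family ?P ?Q _ _ ?e")
proof unfold_locales
  show "finite ?P" "finite ?Q" "?P \<subseteq> hom_inj x z"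
    using hom_inj_finite by auto
  show "coface0_comp x q \<notin> ?P" if "q \<in> ?Q" for q
    using that unfolding coface0_comp_def by simp
  show "h \<in> ?P \<or> (\<exists>q\<in>?Q. h = coface0_comp x q)" if "h \<in> hom_inj x z" for h
    using that hom_inj_odd_eq_coface0_comp[OF that] by blast
  show "?e (Inr q) (coface0_comp x q') = (if q = q' then 1 else 0)" if "q \<in> ?Q" "q' \<in> ?Q" for q q'
    using that kcomp_uD_kbasis_coface0_comp[of q x "z - 1" q'] by (cases z) auto
  show "?e (Inr q) h = 0" if "h \<notin> hom_inj x z" for q h
    using that kcomp_klin[of x "z - 1" z] unfolding klin_def by auto
qed simp

lemma line_coefficient_generators_left:
  "line_coefficient_generators
     ({p \<in> hom_inj x z. even (p 0)} <+> {q \<in> hom_inj x (z - 1). 0 < z \<and> even (q 0)})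
     (case_sum (\<lambda>p. (z, kbasis p)) (\<lambda>q. (z - 1, kbasis q))) (left_generators x) (\<lambda>a. uimg a z)
     (case_sum (\<lambda>_. kid z) (\<lambda>_. uD z)) (case_sum kbasis (\<lambda>q. kcomp x (z - 1) z (uD z) (kbasis q)))
     (\<lambda>a u b. kcomp x a z u b :: _ \<Rightarrow> 'k::field)"
  (is "line_coefficient_generators (?P <+> ?Q) ?gen _ _ ?K ?e _")
proof unfold_locales
  show "finite (?P <+> ?Q)"
    using hom_inj_finite by auto
  show "inj_on ?gen (?P <+> ?Q)"
    by (auto simp: inj_on_def kbasis_eq_iff)
  show "?gen ` (?P <+> ?Q) \<subseteq> left_generators x"
    unfolding left_generators_def by auto
  show "uimg (fst g) z = {0}" if dead: "g \<in> left_generators x - ?gen ` (?P <+> ?Q)"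
    for g :: "nat \<times> ((nat \<Rightarrow> nat) \<Rightarrow> 'k)"
  proof -
    have "g \<in> left_generators x"
      using dead by (rule DiffD1)
    then obtain a p where g: "g = (a, kbasis p)" "p \<in> hom_inj x a" "even (p 0)"
      unfolding left_generators_def by blast
    have "a \<noteq> z"
    proof
      assume "a = z"
      then have "g \<in> ?gen ` (?P <+> ?Q)"
        using g by (intro rev_image_eqI[of "Inl p"]) auto
      with dead show False by blast
    qed
    moreover have "Suc a \<noteq> z"
    proof
      assume "Suc a = z"
      then have "g \<in> ?gen ` (?P <+> ?Q)"
        using g by (intro rev_image_eqI[of "Inr p"]) auto
      with dead show False by blast
    qed
    ultimately show ?thesis
      using g uimg_eq_0 by simp
  qed
  show "uimg (fst (?gen i)) z = {\<lambda>h. c * ?K i h | c. True}" if "i \<in> ?P <+> ?Q" for i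
    using that by (cases z) (auto simp: uimg_self uimg_Suc)
  show "kcomp x (fst (?gen i)) z (\<lambda>h. c * ?K i h) (snd (?gen i)) = (\<lambda>h. c * ?e i h)"
    if "i \<in> ?P <+> ?Q" for i c
    using that by (auto simp: kcomp_scale_left kcomp_kid_left kbasis_klin)
  show "kcomp x a z 0 b = 0" for a b
    by (rule kcomp_zero_left)
qed

lemma ex1_left_coefficients:
  fixes f :: "(nat \<Rightarrow> nat) \<Rightarrow> 'k::field"
  assumes "f \<in> klin x z"
  shows "\<exists>!\<alpha>. (\<forall>g\<in>left_generators x. \<alpha> g \<in> uimg (fst g) z) \<and>
     (\<forall>g. g \<notin> left_generators x \<longrightarrow> \<alpha> g = 0) \<and> finite {g\<in>left_generators x. \<alpha> g \<noteq> 0} \<and>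
     f = (\<Sum>g\<in>{g\<in>left_generators x. \<alpha> g \<noteq> 0}. kcomp x (fst g) z (\<alpha> g) (snd g))"
  using assms unfolding klin_def
  by (intro line_coefficient_generators.ex1_coefficients[OF line_coefficient_generators_left]
      unitriangular_family.ex1_expansion[OF unitriangular_family_left]) auto

section \<open>The right module structure\<close>

definition comp_coface0 :: "nat \<Rightarrow> (nat \<Rightarrow> nat) \<Rightarrow> nat \<Rightarrow> nat" where
  "comp_coface0 x q = (\<lambda>i. if i \<le> x then q (Suc i) else 0)"

lemma hom_inj_pos_eq_comp_coface0:
  assumes h: "h \<in> hom_inj x z" and "h 0 \<noteq> 0"
  shows "\<exists>q \<in> hom_inj (Suc x) z. q 0 = 0 \<and> h = comp_coface0 x q"
proof -
  define q where "q = (\<lambda>i. if i = 0 then 0 else if i \<le> Suc x then h (i - 1) else 0)"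
  have pos: "0 < h i" if "i \<le> x" for i
    using hom_inj_le_mono[OF h _ that, of 0] assms(2) by simp
  have "q \<in> hom_inj (Suc x) z"
  proof (rule hom_injI)
    show "q i < q j" if "i < j" "j \<le> Suc x" for i j
      using that pos[of "j - 1"] hom_inj_less[OF h, of "i - 1" "j - 1"] unfolding q_def by auto
    show "q i \<le> z" if "i \<le> Suc x" for i
      using that hom_inj_le_target[OF h, of "i - 1"] unfolding q_def by auto
  qed (simp add: q_def)
  moreover have "h = comp_coface0 x q"
    using hom_inj_outside[OF h] unfolding comp_coface0_def q_def by (auto simp: fun_eq_iff)
  moreover have "q 0 = 0"
    unfolding q_def by simp
  ultimately show ?thesis by blast
qed

lemma comp_coface0_eq_cmp_coface:
  assumes q: "q \<in> hom_inj (Suc x) z" and q': "q' \<in> hom_inj (Suc x) z" and "q 0 = 0" "q' 0 = 0"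
  shows "comp_coface0 x q' = cmp x q (coface (Suc x) i) \<longleftrightarrow> i = 0 \<and> q' = q"
proof
  assume eq: "comp_coface0 x q' = cmp x q (coface (Suc x) i)"
  have "i = 0"
  proof (rule ccontr)
    assume "i \<noteq> 0"
    then have "q' 1 = q 0"
      using fun_cong[OF eq, of 0] unfolding comp_coface0_def cmp_def coface_def by simp
    then show False
      using hom_inj_less[OF q', of 0 1] assms(3,4) by simp
  qed
  moreover have "q' k = q k" if "k \<le> Suc x" for k
    using fun_cong[OF eq, of "k - 1"] \<open>i = 0\<close> that assms(3,4)
    unfolding comp_coface0_def cmp_def coface_def by (cases k) auto
  ultimately show "i = 0 \<and> q' = q"
    using hom_inj_eqI[OF q' q] by blast
next
  assume "i = 0 \<and> q' = q"
  then show "comp_coface0 x q' = cmp x q (coface (Suc x) i)"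
    unfolding comp_coface0_def cmp_def coface_def by (auto simp: fun_eq_iff)
qed

lemma kcomp_kbasis_uD_comp_coface0:
  assumes q: "q \<in> hom_inj (Suc x) z" and q': "q' \<in> hom_inj (Suc x) z" and "q 0 = 0" "q' 0 = 0"
  shows "kcomp x (Suc x) z (kbasis q) (uD (Suc x)) (comp_coface0 x q')
    = (if q = q' then 1 else (0::'k::field))"
proof -
  have "kcomp x (Suc x) z (kbasis q) (uD (Suc x)) (comp_coface0 x q')
      = (\<Sum>i=0..Suc x. (-1)^i * kbasis (cmp x q (coface (Suc x) i)) (comp_coface0 x q'))"
    unfolding kcomp_kbasis_left[OF q] using coface_hom_inj[of "Suc x"]
    by (simp add: sum_uD_mult hom_inj_finite)
  also have "\<dots> = (\<Sum>i=0..Suc x. if i = 0 then (if q = q' then 1 else 0) else 0)"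
    using comp_coface0_eq_cmp_coface[OF q q' assms(3,4)] by (intro sum.cong) (auto simp: kbasis_def)
  also have "\<dots> = (if q = q' then 1 else 0)"
    by (simp add: sum.delta)
  finally show ?thesis .
qed

definition right_generators :: "nat \<Rightarrow> (nat \<times> ((nat \<Rightarrow> nat) \<Rightarrow> 'k::field)) set" where
  "right_generators z = {(a, kbasis g) | a g. g \<in> hom_inj a z \<and> g 0 = 0}"

lemma unitriangular_family_right:
  "unitriangular_family {p \<in> hom_inj x z. p 0 = 0} {q \<in> hom_inj (Suc x) z. q 0 = 0}
     (hom_inj x z) (comp_coface0 x)
     (case_sum kbasis (\<lambda>q. kcomp x (Suc x) z (kbasis q) (uD (Suc x))) :: _ \<Rightarrow> _ \<Rightarrow> 'k::field)"
  (is "unitriangular_family ?P ?Q _ _ ?e")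
proof unfold_locales
  show "finite ?P" "finite ?Q" "?P \<subseteq> hom_inj x z"
    using hom_inj_finite by auto
  show "comp_coface0 x q \<notin> ?P" if "q \<in> ?Q" for q
    using that hom_inj_less[of q "Suc x" z 0 1] unfolding comp_coface0_def by auto
  show "h \<in> ?P \<or> (\<exists>q\<in>?Q. h = comp_coface0 x q)" if "h \<in> hom_inj x z" for h
    using that hom_inj_pos_eq_comp_coface0[OF that] by blast
  show "?e (Inr q) (comp_coface0 x q') = (if q = q' then 1 else 0)" if "q \<in> ?Q" "q' \<in> ?Q" for q q'
    using that kcomp_kbasis_uD_comp_coface0[of q x z q'] by auto
  show "?e (Inr q) h = 0" if "h \<notin> hom_inj x z" for q h
    using that kcomp_klin[of x "Suc x" z] unfolding klin_def by auto
qed simp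

lemma line_coefficient_generators_right:
  "line_coefficient_generators
     ({p \<in> hom_inj x z. p 0 = 0} <+> {q \<in> hom_inj (Suc x) z. q 0 = 0})
     (case_sum (\<lambda>p. (x, kbasis p)) (\<lambda>q. (Suc x, kbasis q))) (right_generators z) (uimg x)
     (case_sum (\<lambda>_. kid x) (\<lambda>_. uD (Suc x)))
     (case_sum kbasis (\<lambda>q. kcomp x (Suc x) z (kbasis q) (uD (Suc x))))
     (\<lambda>a u b. kcomp x a z b u :: _ \<Rightarrow> 'k::field)"
  (is "line_coefficient_generators (?P <+> ?Q) ?gen _ _ ?K ?e _")
proof unfold_locales
  show "finite (?P <+> ?Q)"
    using hom_inj_finite by auto
  show "inj_on ?gen (?P <+> ?Q)"
    by (auto simp: inj_on_def kbasis_eq_iff)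
  show "?gen ` (?P <+> ?Q) \<subseteq> right_generators z"
    unfolding right_generators_def by auto
  show "uimg x (fst g) = {0}" if dead: "g \<in> right_generators z - ?gen ` (?P <+> ?Q)"
    for g :: "nat \<times> ((nat \<Rightarrow> nat) \<Rightarrow> 'k)"
  proof -
    have "g \<in> right_generators z"
      using dead by (rule DiffD1)
    then obtain a p where g: "g = (a, kbasis p)" "p \<in> hom_inj a z" "p 0 = 0"
      unfolding right_generators_def by blast
    have "x \<noteq> a"
    proof
      assume "x = a"
      then have "g \<in> ?gen ` (?P <+> ?Q)"
        using g by (intro rev_image_eqI[of "Inl p"]) auto
      with dead show False by blast
    qed
    moreover have "Suc x \<noteq> a"
    proof
      assume "Suc x = a"
      then have "g \<in> ?gen ` (?P <+> ?Q)"
        using g by (intro rev_image_eqI[of "Inr p"]) auto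
      with dead show False by blast
    qed
    ultimately show ?thesis
      using g uimg_eq_0 by simp
  qed
  show "uimg x (fst (?gen i)) = {\<lambda>h. c * ?K i h | c. True}" if "i \<in> ?P <+> ?Q" for i
    by (cases i) (simp_all add: uimg_self uimg_Suc)
  show "kcomp x (fst (?gen i)) z (snd (?gen i)) (\<lambda>h. c * ?K i h) = (\<lambda>h. c * ?e i h)"
    if "i \<in> ?P <+> ?Q" for i c
    using that by (auto simp: kcomp_scale_right kcomp_kid_right kbasis_klin)
  show "kcomp x a z b 0 = 0" for a b
    by (rule kcomp_zero_right)
qed

lemma ex1_right_coefficients:
  fixes f :: "(nat \<Rightarrow> nat) \<Rightarrow> 'k::field"
  assumes "f \<in> klin x z"
  shows "\<exists>!\<alpha>. (\<forall>g\<in>right_generators z. \<alpha> g \<in> uimg x (fst g)) \<and>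
     (\<forall>g. g \<notin> right_generators z \<longrightarrow> \<alpha> g = 0) \<and> finite {g\<in>right_generators z. \<alpha> g \<noteq> 0} \<and>
     f = (\<Sum>g\<in>{g\<in>right_generators z. \<alpha> g \<noteq> 0}. kcomp x (fst g) z (snd g) (\<alpha> g))"
  using assms unfolding klin_def
  by (intro line_coefficient_generators.ex1_coefficients[OF line_coefficient_generators_right]
      unitriangular_family.ex1_expansion[OF unitriangular_family_right]) auto

lemma free_left_uimg: "free_left (uimg :: nat \<Rightarrow> nat \<Rightarrow> ((nat \<Rightarrow> nat) \<Rightarrow> 'k::field) set) klin kcomp"
  unfolding free_left_def
proof (intro exI[of _ left_generators] allI conjI ballI)
  show "case g of (a, b) \<Rightarrow> b \<in> klin x a" if "g \<in> left_generators x"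
    for x and g :: "nat \<times> ((nat \<Rightarrow> nat) \<Rightarrow> 'k)"
    using that unfolding left_generators_def by (auto simp: kbasis_klin)
qed (rule ex1_left_coefficients)

lemma free_right_uimg: "free_right (uimg :: nat \<Rightarrow> nat \<Rightarrow> ((nat \<Rightarrow> nat) \<Rightarrow> 'k::field) set) klin kcomp"
  unfolding free_right_def
proof (intro exI[of _ right_generators] allI conjI ballI)
  show "case g of (a, b) \<Rightarrow> b \<in> klin a z" if "g \<in> right_generators z"
    for z and g :: "nat \<times> ((nat \<Rightarrow> nat) \<Rightarrow> 'k)"
    using that unfolding right_generators_def by (auto simp: kbasis_klin)
qed (rule ex1_right_coefficients)

theorem lemma2p1:
  shows "free_left (uimg :: nat \<Rightarrow> nat \<Rightarrow> ((nat \<Rightarrow> nat) \<Rightarrow> 'k::field) set) klin kcomp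
       \<and> free_right (uimg :: nat \<Rightarrow> nat \<Rightarrow> ((nat \<Rightarrow> nat) \<Rightarrow> 'k::field) set) klin kcomp"
  using free_left_uimg free_right_uimg by blast

end
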